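(* Let $G$ be a bipartite graph with parts $B_1,B_2$, and let $a,c\in B_1$ and $b,d\in B_2$. There is perfect pair state transfer between $e_a-e_b$ and $e_c-e_d$ (with respect to the Laplacian of $G$) if and only if there is perfect plus state transfer between $e_a+e_b$ and $e_c+e_d$ (with respect to the unsigned Laplacian of $G$).
   Context: Let $A$ be the adjacency matrix and $\Delta$ the degree matrix of $G$. The Laplacian is $L=\Delta-A$ and the unsigned Laplacian is $L_+=\Delta+A$. Perfect pair state transfer between $e_a-e_b$ and $e_c-e_d$ means $\exp(itL)(e_a-e_b)=\gamma(e_c-e_d)$ for some $t\ge0$ and $\gamma\in\mathbb{C}$, $|\gamma|=1$. Perfect plus state transfer between $e_a+e_b$ and $e_c+e_d$ means $\exp(itL_+)(e_a+e_b)=\gamma(e_c+e_d)$ for some $t\ge0$ and $|\gamma|=1$. Here $e_v$ is the standard basis vector of vertex $v$. *)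

theory Defs
  imports "HOL-Analysis.Analysis"
begin

definition simple_graph :: "('n::finite \<Rightarrow> 'n \<Rightarrow> bool) \<Rightarrow> bool" where
  "simple_graph adj \<longleftrightarrow> (\<forall>u v. adj u v \<longrightarrow> adj v u) \<and> (\<forall>u. \<not> adj u u)"

definition bipartite_parts :: "('n::finite \<Rightarrow> 'n \<Rightarrow> bool) \<Rightarrow> 'n set \<Rightarrow> 'n set \<Rightarrow> bool" where
  "bipartite_parts adj B1 B2 \<longleftrightarrow> B1 \<union> B2 = UNIV \<and> B1 \<inter> B2 = {} \<and>
     (\<forall>u v. adj u v \<longrightarrow> (u \<in> B1 \<and> v \<in> B2) \<or> (u \<in> B2 \<and> v \<in> B1))"

definition adj_matrix :: "('n::finite \<Rightarrow> 'n \<Rightarrow> bool) \<Rightarrow> complex^'n^'n" where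
  "adj_matrix adj = (\<chi> u v. if adj u v then 1 else 0)"

definition deg_matrix :: "('n::finite \<Rightarrow> 'n \<Rightarrow> bool) \<Rightarrow> complex^'n^'n" where
  "deg_matrix adj = (\<chi> u v. if u = v then of_nat (card {w. adj u w}) else 0)"

definition laplacian :: "('n::finite \<Rightarrow> 'n \<Rightarrow> bool) \<Rightarrow> complex^'n^'n" where
  "laplacian adj = deg_matrix adj - adj_matrix adj"

definition signless_laplacian :: "('n::finite \<Rightarrow> 'n \<Rightarrow> bool) \<Rightarrow> complex^'n^'n" where
  "signless_laplacian adj = deg_matrix adj + adj_matrix adj"

definition matpow :: "'a::comm_ring_1^'n::finite^'n \<Rightarrow> nat \<Rightarrow> 'a^'n^'n" where
  "matpow M k = ((\<lambda>X. M ** X) ^^ k) (mat 1)"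

definition exp_itM_vec :: "real \<Rightarrow> complex^'n::finite^'n \<Rightarrow> complex^'n \<Rightarrow> complex^'n" where
  "exp_itM_vec t M v = (\<Sum>k. ((\<i> * of_real t) ^ k / of_nat (fact k)) *s (matpow M k *v v))"

definition basis_vec :: "'n::finite \<Rightarrow> complex^'n" where
  "basis_vec u = (\<chi> w. if w = u then 1 else 0)"

definition perfect_pair_st :: "('n::finite \<Rightarrow> 'n \<Rightarrow> bool) \<Rightarrow> 'n \<Rightarrow> 'n \<Rightarrow> 'n \<Rightarrow> 'n \<Rightarrow> bool" where
  "perfect_pair_st adj a b c d \<longleftrightarrow> (\<exists>t::real. \<exists>\<gamma>::complex. t \<ge> 0 \<and> cmod \<gamma> = 1 \<and>
     exp_itM_vec t (laplacian adj) (basis_vec a - basis_vec b) = \<gamma> *s (basis_vec c - basis_vec d))"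

definition perfect_plus_st :: "('n::finite \<Rightarrow> 'n \<Rightarrow> bool) \<Rightarrow> 'n \<Rightarrow> 'n \<Rightarrow> 'n \<Rightarrow> 'n \<Rightarrow> bool" where
  "perfect_plus_st adj a b c d \<longleftrightarrow> (\<exists>t::real. \<exists>\<gamma>::complex. t \<ge> 0 \<and> cmod \<gamma> = 1 \<and>
     exp_itM_vec t (signless_laplacian adj) (basis_vec a + basis_vec b) = \<gamma> *s (basis_vec c + basis_vec d))"

end

theory Submission
  imports Defs
begin

text \<open>Conjugating by the diagonal sign matrix S that is 1 on B1 and -1 on B2 fixes the
degree matrix and negates the adjacency matrix of a bipartite graph, so S L S = L+ with
S = S\<inverse>. Hence exp(itL+) = S exp(itL) S, and S maps e_a - e_b to e_a + e_b
(and e_c - e_d to e_c + e_d) when a, c lie in B1 and b, d in B2.\<close>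

lemma matpow_Suc: "matpow M (Suc k) = M ** matpow M k"
  by (simp add: matpow_def)

lemma norm_matpow_mult_vec_le:
  fixes M :: "complex^'n::finite^'n"
  assumes K: "\<forall>x. norm (M *v x) \<le> norm x * K" and K_pos: "K > 0"
  shows "norm (matpow M k *v v) \<le> K ^ k * norm v"
proof (induction k)
  case 0
  then show ?case by (simp add: matpow_def)
next
  case (Suc k)
  have "norm (matpow M (Suc k) *v v) = norm (M *v (matpow M k *v v))"
    by (simp add: matpow_Suc matrix_vector_mul_assoc)
  also have "\<dots> \<le> norm (matpow M k *v v) * K" using K by blast
  also have "\<dots> \<le> K ^ k * norm v * K" using Suc K_pos by (simp add: mult_right_mono)
  finally show ?case by (simp add: algebra_simps)
qed

lemma norm_scalar_mult_vec_complex: "norm (c *s (x::complex^'n::finite)) = cmod c * norm x"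
  unfolding norm_vec_def by (simp add: L2_set_right_distrib norm_mult)

lemma summable_exp_itM_series:
  fixes M :: "complex^'n::finite^'n"
  shows "summable (\<lambda>k. ((\<i> * of_real t) ^ k / of_nat (fact k)) *s (matpow M k *v v))"
proof -
  obtain K where K: "\<forall>x. norm (M *v x) \<le> norm x * K" and K_pos: "K > 0"
    using bounded_linear.pos_bounded[OF matrix_vector_mul_bounded_linear[of M]] by blast
  have majorant: "summable (\<lambda>k. norm v * (inverse (fact k) * (\<bar>t\<bar> * K) ^ k))"
    by (intro summable_mult summable_exp)
  show ?thesis
  proof (rule summable_comparison_test'[OF majorant])
    fix k :: nat
    have "norm (((\<i> * of_real t) ^ k / of_nat (fact k)) *s (matpow M k *v v))
        = \<bar>t\<bar> ^ k / fact k * norm (matpow M k *v v)"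
      by (simp add: norm_scalar_mult_vec_complex norm_mult norm_power norm_divide)
    also have "\<dots> \<le> \<bar>t\<bar> ^ k / fact k * (K ^ k * norm v)"
      by (intro mult_left_mono norm_matpow_mult_vec_le[OF K K_pos]) auto
    also have "\<dots> = norm v * (inverse (fact k) * (\<bar>t\<bar> * K) ^ k)"
      by (simp add: field_simps power_mult_distrib)
    finally show "norm (((\<i> * of_real t) ^ k / of_nat (fact k)) *s (matpow M k *v v))
        \<le> norm v * (inverse (fact k) * (\<bar>t\<bar> * K) ^ k)" .
  qed
qed

lemma matpow_conj_involution:
  fixes S M :: "complex^'n::finite^'n"
  assumes SS: "S ** S = mat 1"
  shows "matpow (S ** M ** S) k = S ** matpow M k ** S"
proof (induction k)
  case 0
  then show ?case using SS by (simp add: matpow_def)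
next
  case (Suc k)
  have "matpow (S ** M ** S) (Suc k) = S ** M ** (S ** S) ** matpow M k ** S"
    by (simp add: matpow_Suc Suc matrix_mul_assoc)
  also have "\<dots> = S ** matpow M (Suc k) ** S"
    by (simp add: SS matpow_Suc matrix_mul_assoc)
  finally show ?case .
qed

lemma exp_itM_vec_conj_involution:
  fixes S M :: "complex^'n::finite^'n"
  assumes SS: "S ** S = mat 1"
  shows "exp_itM_vec t (S ** M ** S) v = S *v exp_itM_vec t M (S *v v)"
proof -
  let ?term = "\<lambda>k. ((\<i> * of_real t) ^ k / of_nat (fact k)) *s (matpow M k *v (S *v v))"
  have "exp_itM_vec t (S ** M ** S) v = (\<Sum>k. S *v ?term k)"
    unfolding exp_itM_vec_def
    by (rule suminf_cong)
       (simp add: matpow_conj_involution[OF SS] vector_scalar_commute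
          matrix_vector_mul_assoc matrix_mul_assoc)
  also have "\<dots> = S *v (\<Sum>k. ?term k)"
    by (rule bounded_linear.suminf[OF matrix_vector_mul_bounded_linear
          summable_exp_itM_series, symmetric])
  finally show ?thesis unfolding exp_itM_vec_def .
qed

lemma exp_itM_vec_transfer_conj_involution:
  fixes S M N :: "complex^'n::finite^'n"
  assumes SS: "S ** S = mat 1" and N: "S ** M ** S = N"
    and v: "S *v v = v'" and w: "S *v w = w'"
    and transfer: "exp_itM_vec t M v = \<gamma> *s w"
  shows "exp_itM_vec t N v' = \<gamma> *s w'"
proof -
  have "S *v v' = v" using v SS by (metis matrix_vector_mul_assoc matrix_vector_mul_lid)
  then have "exp_itM_vec t N v' = S *v (\<gamma> *s w)"
    using N transfer exp_itM_vec_conj_involution[OF SS, of t M v'] by simp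
  then show ?thesis using w by (simp add: vector_scalar_commute)
qed

lemma exp_itM_vec_transfer_conj_involution_iff:
  fixes S M N :: "complex^'n::finite^'n"
  assumes SS: "S ** S = mat 1" and N: "S ** M ** S = N"
    and v: "S *v v = v'" and w: "S *v w = w'"
  shows "exp_itM_vec t M v = \<gamma> *s w \<longleftrightarrow> exp_itM_vec t N v' = \<gamma> *s w'"
proof -
  have "S ** N ** S = (S ** S) ** M ** (S ** S)"
    unfolding N[symmetric] by (simp add: matrix_mul_assoc)
  then have "S ** N ** S = M" using SS by simp
  moreover have "S *v v' = v" "S *v w' = w" using v w SS
    by (metis matrix_vector_mul_assoc matrix_vector_mul_lid)+
  ultimately show ?thesis
    using exp_itM_vec_transfer_conj_involution[OF SS] N v w by metis
qed

definition diag_matrix :: "('n::finite \<Rightarrow> complex) \<Rightarrow> complex^'n^'n" where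
  "diag_matrix s = (\<chi> i j. if i = j then s i else 0)"

lemma diag_matrix_mult_vec: "(diag_matrix s *v x) $ i = s i * x $ i"
  by (simp add: diag_matrix_def matrix_vector_mult_def if_distrib if_distribR cong: if_cong)

lemma diag_matrix_mult_left: "(diag_matrix s ** M) $ i $ j = s i * M $ i $ j"
  by (simp add: diag_matrix_def matrix_matrix_mult_def if_distrib if_distribR cong: if_cong)

lemma diag_matrix_mult_right: "(M ** diag_matrix s) $ i $ j = M $ i $ j * s j"
  by (simp add: diag_matrix_def matrix_matrix_mult_def if_distrib if_distribR cong: if_cong)

lemma diag_matrix_involution:
  assumes "\<And>i. s i * s i = 1"
  shows "diag_matrix s ** diag_matrix s = mat 1"
  using assms by (simp add: vec_eq_iff diag_matrix_mult_left) (simp add: diag_matrix_def mat_def)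

text \<open>No irreflexivity is needed, since a loop at i would force s i * s i = -1.\<close>

lemma signing_laplacian_eq_signless_laplacian:
  assumes sq: "\<And>i. s i * s i = 1" and edge: "\<And>i j. adj i j \<Longrightarrow> s i * s j = -1"
  shows "diag_matrix s ** laplacian adj ** diag_matrix s = signless_laplacian adj"
proof -
  have "s i * laplacian adj $ i $ j * s j = signless_laplacian adj $ i $ j" for i j
  proof (cases "i = j")
    case True
    have "\<not> adj i i" using sq[of i] edge[of i i] by auto
    then show ?thesis using True sq[of i]
      by (simp add: laplacian_def signless_laplacian_def deg_matrix_def adj_matrix_def
          algebra_simps)
  next
    case False
    then show ?thesis using edge[of i j]
      by (auto simp: laplacian_def signless_laplacian_def deg_matrix_def adj_matrix_def
          algebra_simps)
  qed
  then show ?thesis by (simp add: vec_eq_iff diag_matrix_mult_left diag_matrix_mult_right)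
qed

theorem mainTheorem7:
  fixes adj :: "'n::finite \<Rightarrow> 'n \<Rightarrow> bool" and B1 B2 :: "'n set" and a b c d :: 'n
  assumes "simple_graph adj"
    and "bipartite_parts adj B1 B2"
    and "a \<in> B1" and "c \<in> B1" and "b \<in> B2" and "d \<in> B2"
  shows "perfect_pair_st adj a b c d \<longleftrightarrow> perfect_plus_st adj a b c d"
proof -
  define s :: "'n \<Rightarrow> complex" where "s i = (if i \<in> B1 then 1 else -1)" for i
  have sq: "s i * s i = 1" for i by (simp add: s_def)
  have parts: "i \<in> B2 \<longleftrightarrow> i \<notin> B1" for i
    using assms(2) unfolding bipartite_parts_def by auto
  have edge: "s i * s j = -1" if "adj i j" for i j
    using assms(2) that parts unfolding bipartite_parts_def s_def by fastforce
  have signing: "diag_matrix s *v (basis_vec x - basis_vec y) = basis_vec x + basis_vec y"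
    if "x \<in> B1" "y \<in> B2" for x y
    using that parts by (auto simp: vec_eq_iff diag_matrix_mult_vec basis_vec_def s_def)
  show ?thesis
    unfolding perfect_pair_st_def perfect_plus_st_def
    using exp_itM_vec_transfer_conj_involution_iff[OF diag_matrix_involution[OF sq]
        signing_laplacian_eq_signless_laplacian[OF sq edge] signing signing] assms(3-6)
    by simp
qed

end
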